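(* For any strategy profile $g$, any player $i$, any $t$, any $(a_{1:t-1},x^i_{1:t},a^i_t)$ of positive probability under $g$, and any $(\tilde x_t,\tilde a_t)\in\mathcal X\times\mathcal A$, $$P^g(X_t=\tilde x_t,A_t=\tilde a_t\mid a_{1:t-1},x^i_{1:t},a^i_t)=\mathbf 1\{\tilde x^i_t=x^i_t,\tilde a^i_t=a^i_t\}\,P^{g^{-i}}(X^{-i}_t=\tilde x^{-i}_t,A^{-i}_t=\tilde a^{-i}_t\mid a_{1:t-1}),$$ so this conditional probability depends on the private history only through $x^i_t$, and on the profile only through $g^{-i}$.
   Context: Model: players $\mathcal N=\{1,\dots,N\}$, horizon $\mathcal T=\{1,\dots,T\}$, finite type sets $\mathcal X^i$ and action sets $\mathcal A^i$, $\mathcal X=\times_i\mathcal X^i$, $\mathcal A=\times_i\mathcal A^i$. Types evolve as $P(x_1)=\prod_iQ^i_1(x^i_1)$ and $P(x_{t+1}\mid x_{1:t},a_{1:t})=\prod_iQ^i_{t+1}(x^i_{t+1}\mid x^i_t,a_t)$ for known kernels (each may depend on the full action profile). Player $i$ privately observes its own types and all actions are public; a strategy $g^i$ specifies $g^i_t(\cdot\mid a_{1:t-1},x^i_{1:t})\in\mathcal P(\mathcal A^i)$, and players randomize independently given their information. $P^g$ denotes probability under profile $g$; $-i$ denotes all players except $i$; $P^{g^{-i}}(\cdot\mid a_{1:t-1})$ denotes a conditional probability of the other players' current types and actions given the public history which depends only on $g^{-i}$. *)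

theory Defs
  imports Complex_Main
begin

text \<open>
  Time t (1-based) corresponds to list index t - 1.
  Q1 i : initial type distribution of player i.
  Q i t' x a x' : Q^i_{t'}(x' | x, a), the kernel for time t' (t' >= 2),
     given the previous own type x and the previous full action profile a.
  A strategy profile g: g i ah xih ai = g^i_t(ai | a_{1:t-1}, x^i_{1:t}),
     where ah = a_{1:t-1} (length t-1) and xih = x^i_{1:t} (length t).
\<close>

definition type_profiles :: "('n \<Rightarrow> 'x set) \<Rightarrow> ('n \<Rightarrow> 'x) set" where
  "type_profiles Xs = {x. \<forall>i. x i \<in> Xs i}"

definition action_profiles :: "('n \<Rightarrow> 'a set) \<Rightarrow> ('n \<Rightarrow> 'a) set" where
  "action_profiles As = {a. \<forall>i. a i \<in> As i}"

definition valid_model ::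
  "('n::finite \<Rightarrow> 'x set) \<Rightarrow> ('n \<Rightarrow> 'a set) \<Rightarrow> nat \<Rightarrow>
   ('n \<Rightarrow> 'x \<Rightarrow> real) \<Rightarrow> ('n \<Rightarrow> nat \<Rightarrow> 'x \<Rightarrow> ('n \<Rightarrow> 'a) \<Rightarrow> 'x \<Rightarrow> real) \<Rightarrow> bool" where
  "valid_model Xs As T Q1 Q \<longleftrightarrow>
     (\<forall>i. finite (Xs i) \<and> finite (As i)) \<and>
     (\<forall>i. (\<forall>x\<in>Xs i. 0 \<le> Q1 i x) \<and> (\<Sum>x\<in>Xs i. Q1 i x) = 1) \<and>
     (\<forall>i t x a. 2 \<le> t \<and> t \<le> T \<and> x \<in> Xs i \<and> a \<in> action_profiles As \<longrightarrow>
        (\<forall>x'\<in>Xs i. 0 \<le> Q i t x a x') \<and> (\<Sum>x'\<in>Xs i. Q i t x a x') = 1)"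

definition valid_strategy ::
  "('n::finite \<Rightarrow> 'x set) \<Rightarrow> ('n \<Rightarrow> 'a set) \<Rightarrow> nat \<Rightarrow>
   ('n \<Rightarrow> ('n \<Rightarrow> 'a) list \<Rightarrow> 'x list \<Rightarrow> 'a \<Rightarrow> real) \<Rightarrow> bool" where
  "valid_strategy Xs As T g \<longleftrightarrow>
     (\<forall>i ah xih. length xih = Suc (length ah) \<and> length xih \<le> T \<and>
        set ah \<subseteq> action_profiles As \<and> set xih \<subseteq> Xs i \<longrightarrow>
        (\<forall>ai\<in>As i. 0 \<le> g i ah xih ai) \<and> (\<Sum>ai\<in>As i. g i ah xih ai) = 1)"

definition trajs :: "('n \<Rightarrow> 'x set) \<Rightarrow> ('n \<Rightarrow> 'a set) \<Rightarrow> nat \<Rightarrow>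
   (('n \<Rightarrow> 'x) list \<times> ('n \<Rightarrow> 'a) list) set" where
  "trajs Xs As T = {(xs, as). length xs = T \<and> length as = T \<and>
      set xs \<subseteq> type_profiles Xs \<and> set as \<subseteq> action_profiles As}"

definition traj_weight ::
  "('n::finite \<Rightarrow> 'x \<Rightarrow> real) \<Rightarrow> ('n \<Rightarrow> nat \<Rightarrow> 'x \<Rightarrow> ('n \<Rightarrow> 'a) \<Rightarrow> 'x \<Rightarrow> real) \<Rightarrow>
   ('n \<Rightarrow> ('n \<Rightarrow> 'a) list \<Rightarrow> 'x list \<Rightarrow> 'a \<Rightarrow> real) \<Rightarrow>
   ('n \<Rightarrow> 'x) list \<Rightarrow> ('n \<Rightarrow> 'a) list \<Rightarrow> real" where
  "traj_weight Q1 Q g xs as =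
     (\<Prod>i\<in>UNIV. Q1 i (hd xs i)) *
     (\<Prod>s<length as. \<Prod>i\<in>UNIV. g i (take s as) (map (\<lambda>x. x i) (take (Suc s) xs)) ((as ! s) i)) *
     (\<Prod>s<length xs - 1. \<Prod>i\<in>UNIV. Q i (s + 2) ((xs ! s) i) (as ! s) ((xs ! Suc s) i))"

definition game_prob ::
  "('n::finite \<Rightarrow> 'x set) \<Rightarrow> ('n \<Rightarrow> 'a set) \<Rightarrow> nat \<Rightarrow>
   ('n \<Rightarrow> 'x \<Rightarrow> real) \<Rightarrow> ('n \<Rightarrow> nat \<Rightarrow> 'x \<Rightarrow> ('n \<Rightarrow> 'a) \<Rightarrow> 'x \<Rightarrow> real) \<Rightarrow>
   ('n \<Rightarrow> ('n \<Rightarrow> 'a) list \<Rightarrow> 'x list \<Rightarrow> 'a \<Rightarrow> real) \<Rightarrow>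
   (('n \<Rightarrow> 'x) list \<times> ('n \<Rightarrow> 'a) list \<Rightarrow> bool) \<Rightarrow> real" where
  "game_prob Xs As T Q1 Q g E =
     (\<Sum>h\<in>{h\<in>trajs Xs As T. E h}. traj_weight Q1 Q g (fst h) (snd h))"

definition game_cond_prob ::
  "('n::finite \<Rightarrow> 'x set) \<Rightarrow> ('n \<Rightarrow> 'a set) \<Rightarrow> nat \<Rightarrow>
   ('n \<Rightarrow> 'x \<Rightarrow> real) \<Rightarrow> ('n \<Rightarrow> nat \<Rightarrow> 'x \<Rightarrow> ('n \<Rightarrow> 'a) \<Rightarrow> 'x \<Rightarrow> real) \<Rightarrow>
   ('n \<Rightarrow> ('n \<Rightarrow> 'a) list \<Rightarrow> 'x list \<Rightarrow> 'a \<Rightarrow> real) \<Rightarrow>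
   (('n \<Rightarrow> 'x) list \<times> ('n \<Rightarrow> 'a) list \<Rightarrow> bool) \<Rightarrow>
   (('n \<Rightarrow> 'x) list \<times> ('n \<Rightarrow> 'a) list \<Rightarrow> bool) \<Rightarrow> real" where
  "game_cond_prob Xs As T Q1 Q g E F =
     game_prob Xs As T Q1 Q g (\<lambda>h. E h \<and> F h) / game_prob Xs As T Q1 Q g F"

end

(*
  An event that depends only on the first t stages has the same probability at horizon T as at
  horizon t, because the weights of the later stages sum to one; so everything reduces to the
  weights of length-t histories.  Such a weight is a product of one factor per player, and the
  factor of player j involves only j's own types and actions and the public actions a_{1:t-1}.
  Hence, for two histories with the same public past, exchanging the coordinates of player i
  preserves the product of their weights, even when the two weights are computed under profiles
  that differ in player i's strategy.  Summing this identity over pairs of histories shows that,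
  given a_{1:t-1}, the information of player i is independent of the other players' current
  types and actions, and that the conditional law of the latter does not depend on g^i.
*)

theory Submission
  imports Defs "HOL-Library.FuncSet"
begin

type_synonym ('n, 'x, 'a) history = "('n \<Rightarrow> 'x) list \<times> ('n \<Rightarrow> 'a) list"

lemma type_profiles_eq_PiE: "type_profiles Xs = PiE UNIV Xs"
  unfolding type_profiles_def PiE_UNIV_domain Pi_def by auto

lemma action_profiles_eq_PiE: "action_profiles As = PiE UNIV As"
  unfolding action_profiles_def PiE_UNIV_domain Pi_def by auto

lemma valid_model_finite:
  assumes "valid_model Xs As T Q1 Q"
  shows "finite (type_profiles Xs)" "finite (action_profiles As)"
  using assms unfolding valid_model_def type_profiles_eq_PiE action_profiles_eq_PiE
  by (auto intro!: finite_PiE)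

lemma sum_PiE_UNIV_prod:
  fixes f :: "'n::finite \<Rightarrow> 'b \<Rightarrow> 'c::comm_semiring_1"
  assumes "\<And>i. finite (S i)"
  shows "(\<Sum>p\<in>PiE UNIV S. \<Prod>i\<in>UNIV. f i (p i)) = (\<Prod>i\<in>UNIV. sum (f i) (S i))"
  using prod_sum_PiE[of UNIV S f] assms by simp

lemma finite_trajs:
  assumes "finite (type_profiles Xs)" "finite (action_profiles As)"
  shows "finite (trajs Xs As n)"
proof (rule finite_subset)
  show "trajs Xs As n \<subseteq> {xs. set xs \<subseteq> type_profiles Xs \<and> length xs = n}
                        \<times> {as. set as \<subseteq> action_profiles As \<and> length as = n}"
    unfolding trajs_def by auto
qed (use assms in \<open>intro finite_cartesian_product finite_lists_length_eq\<close>)+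

section \<open>Summing out the future\<close>

lemma trajs_Suc:
  "trajs Xs As (Suc n) = (\<lambda>((xs, as), (x, a)). (xs @ [x], as @ [a])) `
     (trajs Xs As n \<times> (type_profiles Xs \<times> action_profiles As))"
proof (intro equalityI subsetI)
  fix h assume h: "h \<in> trajs Xs As (Suc n)"
  obtain xs as where [simp]: "h = (xs, as)" by (cases h)
  have ne: "xs \<noteq> []" "as \<noteq> []"
    using h by (auto simp: trajs_def)
  then have "xs = butlast xs @ [last xs]" "as = butlast as @ [last as]"
    by simp_all
  moreover have "((butlast xs, butlast as), (last xs, last as))
                   \<in> trajs Xs As n \<times> (type_profiles Xs \<times> action_profiles As)"
    using h ne by (auto simp: trajs_def dest: in_set_butlastD)
  ultimately show "h \<in> (\<lambda>((xs, as), (x, a)). (xs @ [x], as @ [a])) `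
                     (trajs Xs As n \<times> (type_profiles Xs \<times> action_profiles As))"
    by (auto intro!: image_eqI)
qed (auto simp: trajs_def)

lemma traj_weight_snoc:
  assumes "length xs = n" "length as = n" "1 \<le> n"
  shows "traj_weight Q1 Q g (xs @ [x]) (as @ [a]) = traj_weight Q1 Q g xs as *
           (\<Prod>i\<in>UNIV. g i as (map (\<lambda>x. x i) (xs @ [x])) (a i)) *
           (\<Prod>i\<in>UNIV. Q i (n + 1) (last xs i) (last as) (x i))"
proof -
  obtain m where n: "n = Suc m" using assms by (cases n) auto
  have ne: "xs \<noteq> []" "as \<noteq> []" using assms by auto
  moreover have
    "(\<Prod>s<n + 1. \<Prod>i\<in>UNIV. g i (take s (as @ [a])) (map (\<lambda>x. x i) (take (Suc s) (xs @ [x])))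
        (((as @ [a]) ! s) i))
     = (\<Prod>s<n. \<Prod>i\<in>UNIV. g i (take s as) (map (\<lambda>x. x i) (take (Suc s) xs)) ((as ! s) i)) *
       (\<Prod>i\<in>UNIV. g i as (map (\<lambda>x. x i) (xs @ [x])) (a i))"
    using assms by (simp add: nth_append)
  moreover have
    "(\<Prod>s<n. \<Prod>i\<in>UNIV. Q i (s + 2) (((xs @ [x]) ! s) i) ((as @ [a]) ! s) (((xs @ [x]) ! Suc s) i))
     = (\<Prod>s<n - 1. \<Prod>i\<in>UNIV. Q i (s + 2) ((xs ! s) i) (as ! s) ((xs ! Suc s) i)) *
       (\<Prod>i\<in>UNIV. Q i (n + 1) (last xs i) (last as) (x i))"
    using assms ne by (simp add: n nth_append last_conv_nth)
  ultimately show ?thesis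
    using assms unfolding traj_weight_def by (simp add: mult_ac)
qed

lemma sum_traj_weight_snoc:
  assumes model: "valid_model Xs As T Q1 Q" and strat: "valid_strategy Xs As T g"
    and n: "1 \<le> n" "n < T"
    and h: "(xs, as) \<in> trajs Xs As n"
  shows "(\<Sum>x\<in>type_profiles Xs. \<Sum>a\<in>action_profiles As. traj_weight Q1 Q g (xs @ [x]) (as @ [a]))
         = traj_weight Q1 Q g xs as"
proof -
  have fin: "finite (Xs i)" "finite (As i)" for i
    using model unfolding valid_model_def by auto
  have len: "length xs = n" "length as = n" and ne: "xs \<noteq> []" "as \<noteq> []"
    using h n by (auto simp: trajs_def)
  have last_in: "last xs \<in> type_profiles Xs" "last as \<in> action_profiles As"
    using h ne by (auto simp: trajs_def)
  have actions: "(\<Sum>a\<in>action_profiles As. \<Prod>i\<in>UNIV. g i as (map (\<lambda>x. x i) (xs @ [x])) (a i)) = 1"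
    if x: "x \<in> type_profiles Xs" for x
  proof -
    have "(\<Sum>b\<in>As i. g i as (map (\<lambda>x. x i) (xs @ [x])) b) = 1" for i
    proof -
      have "set (map (\<lambda>x. x i) (xs @ [x])) \<subseteq> Xs i"
        using h x by (auto simp: trajs_def type_profiles_def)
      then show ?thesis
        using strat h len n unfolding valid_strategy_def trajs_def by auto
    qed
    then show ?thesis
      unfolding action_profiles_eq_PiE
      using sum_PiE_UNIV_prod[OF fin(2), of "\<lambda>i. g i as (map (\<lambda>x. x i) (xs @ [x]))"] by simp
  qed
  have types: "(\<Sum>x\<in>type_profiles Xs. \<Prod>i\<in>UNIV. Q i (n + 1) (last xs i) (last as) (x i)) = 1"
  proof -
    have "(\<Sum>b\<in>Xs i. Q i (n + 1) (last xs i) (last as) b) = 1" for i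
      using model last_in n unfolding valid_model_def type_profiles_def by auto
    then show ?thesis
      unfolding type_profiles_eq_PiE
      using sum_PiE_UNIV_prod[OF fin(1), of "\<lambda>i. Q i (n + 1) (last xs i) (last as)"] by simp
  qed
  have "(\<Sum>x\<in>type_profiles Xs. \<Sum>a\<in>action_profiles As. traj_weight Q1 Q g (xs @ [x]) (as @ [a]))
     = (\<Sum>x\<in>type_profiles Xs. traj_weight Q1 Q g xs as * (\<Prod>i\<in>UNIV. Q i (n + 1) (last xs i) (last as) (x i)) *
          (\<Sum>a\<in>action_profiles As. \<Prod>i\<in>UNIV. g i as (map (\<lambda>x. x i) (xs @ [x])) (a i)))"
    using len n by (simp add: traj_weight_snoc sum_distrib_left mult_ac)
  also have "\<dots> = traj_weight Q1 Q g xs as"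
    using actions types by (simp add: sum_distrib_left[symmetric])
  finally show ?thesis .
qed

lemma sum_traj_weight_extensions:
  fixes Xs :: "'n::finite \<Rightarrow> 'x set" and As :: "'n \<Rightarrow> 'a set"
  assumes model: "valid_model Xs As T Q1 Q" and strat: "valid_strategy Xs As T g"
    and t: "1 \<le> t" "t \<le> n" "n \<le> T" and p: "p \<in> trajs Xs As t"
  shows "(\<Sum>h\<in>{h \<in> trajs Xs As n. (take t (fst h), take t (snd h)) = p}.
            traj_weight Q1 Q g (fst h) (snd h)) = traj_weight Q1 Q g (fst p) (snd p)"
  using t(2,3)
proof (induction n rule: dec_induct)
  case base
  have "{h \<in> trajs Xs As t. (take t (fst h), take t (snd h)) = p} = {p}"
    using p by (auto simp: trajs_def)
  then show ?case by simp
next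
  case (step n)
  define ext where "ext = (\<lambda>((xs, as), (x :: 'n \<Rightarrow> 'x, a :: 'n \<Rightarrow> 'a)). (xs @ [x], as @ [a]))"
  define S where "S = {h \<in> trajs Xs As n. (take t (fst h), take t (snd h)) = p}"
  have "{z \<in> trajs Xs As n \<times> (type_profiles Xs \<times> action_profiles As).
          (take t (fst (ext z)), take t (snd (ext z))) = p}
        = S \<times> (type_profiles Xs \<times> action_profiles As)"
    using step(1) by (auto simp: S_def ext_def trajs_def)
  then have S_Suc: "{h \<in> trajs Xs As (Suc n). (take t (fst h), take t (snd h)) = p}
                      = ext ` (S \<times> (type_profiles Xs \<times> action_profiles As))"
    unfolding trajs_Suc ext_def[symmetric] by blast
  have inj: "inj_on ext (S \<times> (type_profiles Xs \<times> action_profiles As))"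
    unfolding S_def trajs_def ext_def inj_on_def by auto
  have "(\<Sum>h\<in>ext ` (S \<times> (type_profiles Xs \<times> action_profiles As)). traj_weight Q1 Q g (fst h) (snd h))
      = (\<Sum>h\<in>S. \<Sum>x\<in>type_profiles Xs. \<Sum>a\<in>action_profiles As.
           traj_weight Q1 Q g (fst h @ [x]) (snd h @ [a]))"
    by (simp only: sum.reindex[OF inj]) (simp add: sum.cartesian_product ext_def case_prod_beta)
  also have "\<dots> = (\<Sum>h\<in>S. traj_weight Q1 Q g (fst h) (snd h))"
    using step t by (intro sum.cong refl sum_traj_weight_snoc[OF model strat, where n = n])
                    (auto simp: S_def)
  also have "\<dots> = traj_weight Q1 Q g (fst p) (snd p)"
    using step.IH step.prems unfolding S_def by simp
  finally show ?case unfolding S_Suc .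
qed

lemma game_prob_truncate:
  fixes Xs :: "'n::finite \<Rightarrow> 'x set" and As :: "'n \<Rightarrow> 'a set"
  assumes model: "valid_model Xs As T Q1 Q" and strat: "valid_strategy Xs As T g"
    and t: "1 \<le> t" "t \<le> T"
    and prefix_event: "\<And>h. h \<in> trajs Xs As T \<Longrightarrow> E h = E (take t (fst h), take t (snd h))"
  shows "game_prob Xs As T Q1 Q g E = game_prob Xs As t Q1 Q g E"
proof -
  define prefix where "prefix h = (take t (fst h), take t (snd h))"
    for h :: "('n, 'x, 'a) history"
  have fin: "finite (trajs Xs As n)" for n
    using model by (intro finite_trajs valid_model_finite)
  have "prefix ` {h \<in> trajs Xs As T. E h} \<subseteq> {p \<in> trajs Xs As t. E p}"
    using t prefix_event by (auto simp: prefix_def trajs_def) (meson in_set_takeD subsetD)+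
  then have "game_prob Xs As T Q1 Q g E = (\<Sum>p\<in>{p \<in> trajs Xs As t. E p}.
      \<Sum>h\<in>{h \<in> trajs Xs As T. E h \<and> prefix h = p}. traj_weight Q1 Q g (fst h) (snd h))"
    unfolding game_prob_def using fin by (subst sum.group[symmetric]) auto
  also have "\<dots> = (\<Sum>p\<in>{p \<in> trajs Xs As t. E p}. traj_weight Q1 Q g (fst p) (snd p))"
  proof (intro sum.cong refl)
    fix p assume p: "p \<in> {p \<in> trajs Xs As t. E p}"
    then have "{h \<in> trajs Xs As T. E h \<and> prefix h = p} = {h \<in> trajs Xs As T. prefix h = p}"
      using prefix_event by (auto simp: prefix_def)
    then show "(\<Sum>h\<in>{h \<in> trajs Xs As T. E h \<and> prefix h = p}. traj_weight Q1 Q g (fst h) (snd h))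
             = traj_weight Q1 Q g (fst p) (snd p)"
      using sum_traj_weight_extensions[OF model strat t order_refl] p by (simp add: prefix_def)
  qed
  finally show ?thesis unfolding game_prob_def .
qed

lemma traj_weight_nonneg:
  assumes model: "valid_model Xs As T Q1 Q" and strat: "valid_strategy Xs As T g"
    and h: "(xs, as) \<in> trajs Xs As n" and n: "1 \<le> n" "n \<le> T"
  shows "0 \<le> traj_weight Q1 Q g xs as"
proof -
  have len: "length xs = n" "length as = n"
    using h by (auto simp: trajs_def)
  have types: "(xs ! k) j \<in> Xs j" if "k < n" for k j
    using h len that nth_mem[of k xs] by (auto simp: trajs_def type_profiles_def subset_iff)
  have actions: "as ! k \<in> action_profiles As" if "k < n" for k
    using h len that nth_mem[of k as] by (auto simp: trajs_def)
  have "xs \<noteq> []"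
    using len n by auto
  then have "0 \<le> Q1 j (hd xs j)" for j
    using model types[of 0 j] n by (auto simp: valid_model_def hd_conv_nth)
  moreover have "0 \<le> g j (take s as) (map (\<lambda>x. x j) (take (Suc s) xs)) ((as ! s) j)" if "s < n" for s j
  proof -
    have "set (take s as) \<subseteq> action_profiles As" "set (map (\<lambda>x. x j) (take (Suc s) xs)) \<subseteq> Xs j"
      using h by (auto simp: trajs_def type_profiles_def dest!: in_set_takeD)
    moreover have "(as ! s) j \<in> As j"
      using actions[OF that] by (simp add: action_profiles_def)
    ultimately show ?thesis
      using strat that len n unfolding valid_strategy_def by auto
  qed
  moreover have "0 \<le> Q j (s + 2) ((xs ! s) j) (as ! s) ((xs ! Suc s) j)" if "s < n - 1" for s j
    using model that n types[of s j] types[of "Suc s" j] actions[of s] unfolding valid_model_def by auto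
  ultimately show ?thesis
    unfolding traj_weight_def using len by (intro mult_nonneg_nonneg prod_nonneg) auto
qed

lemma game_prob_mono:
  assumes model: "valid_model Xs As T Q1 Q" and strat: "valid_strategy Xs As T g" and T: "1 \<le> T"
    and imp: "\<And>h. E h \<Longrightarrow> F h"
  shows "game_prob Xs As T Q1 Q g E \<le> game_prob Xs As T Q1 Q g F"
  unfolding game_prob_def
proof (rule sum_mono2)
  show "finite {h \<in> trajs Xs As T. F h}"
    using model by (intro finite_subset[OF _ finite_trajs] valid_model_finite) auto
  show "{h \<in> trajs Xs As T. E h} \<subseteq> {h \<in> trajs Xs As T. F h}"
    using imp by auto
  show "0 \<le> traj_weight Q1 Q g (fst h) (snd h)" if "h \<in> {h \<in> trajs Xs As T. F h} - {h \<in> trajs Xs As T. E h}" for h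
    using that traj_weight_nonneg[OF model strat _ T order_refl] by auto
qed

section \<open>Exchanging the coordinates of one player\<close>

definition graft_list :: "'n \<Rightarrow> ('n \<Rightarrow> 'b) list \<Rightarrow> ('n \<Rightarrow> 'b) list \<Rightarrow> ('n \<Rightarrow> 'b) list" where
  "graft_list i xs ys = map2 (\<lambda>x y. y(i := x i)) xs ys"

definition graft :: "'n \<Rightarrow> ('n, 'x, 'a) history \<Rightarrow> ('n, 'x, 'a) history \<Rightarrow> ('n, 'x, 'a) history" where
  "graft i p q = (graft_list i (fst p) (fst q), graft_list i (snd p) (snd q))"

lemma length_graft_list [simp]: "length (graft_list i xs ys) = min (length xs) (length ys)"
  by (simp add: graft_list_def)

lemma nth_graft_list [simp]:
  "k < length xs \<Longrightarrow> k < length ys \<Longrightarrow> graft_list i xs ys ! k = (ys ! k)(i := (xs ! k) i)"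
  by (simp add: graft_list_def)

lemma take_graft_list: "take k (graft_list i xs ys) = graft_list i (take k xs) (take k ys)"
  by (simp add: graft_list_def take_map take_zip)

lemma graft_list_self [simp]: "graft_list i xs xs = xs"
  by (induction xs) (simp_all add: graft_list_def)

lemma map_apply_graft_list:
  "length xs = length ys \<Longrightarrow>
     map (\<lambda>x. x j) (graft_list i xs ys) = map (\<lambda>x. x j) (if j = i then xs else ys)"
  by (auto intro: nth_equalityI)

lemma graft_list_graft_list:
  "length xs = length ys \<Longrightarrow> graft_list i (graft_list i xs ys) (graft_list i ys xs) = xs"
  by (auto intro: nth_equalityI)

lemma set_graft_list_subset:
  assumes "length xs = length ys" "set xs \<subseteq> {f. \<forall>j. f j \<in> S j}" "set ys \<subseteq> {f. \<forall>j. f j \<in> S j}"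
  shows "set (graft_list i xs ys) \<subseteq> {f. \<forall>j. f j \<in> S j}"
proof
  fix z assume "z \<in> set (graft_list i xs ys)"
  then obtain k where k: "k < length xs" "z = (ys ! k)(i := (xs ! k) i)"
    using assms(1) by (auto simp: in_set_conv_nth)
  then have "xs ! k \<in> set xs" "ys ! k \<in> set ys"
    using assms(1) by simp_all
  with assms k show "z \<in> {f. \<forall>j. f j \<in> S j}"
    by (auto simp: subset_iff)
qed

lemma graft_in_trajs:
  assumes "p \<in> trajs Xs As n" "q \<in> trajs Xs As n"
  shows "graft i p q \<in> trajs Xs As n"
  using assms set_graft_list_subset[of "fst p" "fst q" Xs i]
    set_graft_list_subset[of "snd p" "snd q" As i]
  by (auto simp: graft_def trajs_def type_profiles_def action_profiles_def subset_iff)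

lemma graft_graft:
  assumes "length (fst p) = length (fst q)" "length (snd p) = length (snd q)"
  shows "graft i (graft i p q) (graft i q p) = p"
  using assms by (simp add: graft_def graft_list_graft_list)

definition player_weight ::
  "('n \<Rightarrow> 'x \<Rightarrow> real) \<Rightarrow> ('n \<Rightarrow> nat \<Rightarrow> 'x \<Rightarrow> ('n \<Rightarrow> 'a) \<Rightarrow> 'x \<Rightarrow> real) \<Rightarrow>
   ('n \<Rightarrow> ('n \<Rightarrow> 'a) list \<Rightarrow> 'x list \<Rightarrow> 'a \<Rightarrow> real) \<Rightarrow> 'n \<Rightarrow>
   ('n \<Rightarrow> 'x) list \<Rightarrow> ('n \<Rightarrow> 'a) list \<Rightarrow> real" where
  "player_weight Q1 Q g j xs as =
     Q1 j (hd xs j) *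
     (\<Prod>s<length as. g j (take s as) (map (\<lambda>x. x j) (take (Suc s) xs)) ((as ! s) j)) *
     (\<Prod>s<length xs - 1. Q j (s + 2) ((xs ! s) j) (as ! s) ((xs ! Suc s) j))"

lemma traj_weight_eq_prod_player_weight:
  "traj_weight Q1 Q g xs as = (\<Prod>j\<in>UNIV. player_weight Q1 Q g j xs as)"
  unfolding traj_weight_def player_weight_def prod.distrib
  by (simp add: prod.swap[where A = UNIV])

lemma player_weight_local:
  assumes len: "length xs = t" "length xs' = t" "length as = t" "length as' = t"
    and own_types: "map (\<lambda>x. x j) xs = map (\<lambda>x. x j) xs'"
    and own_actions: "map (\<lambda>a. a j) as = map (\<lambda>a. a j) as'"
    and public_past: "take (t - 1) as = take (t - 1) as'"
  shows "player_weight Q1 Q g j xs as = player_weight Q1 Q g j xs' as'"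
proof -
  have type_eq: "(xs ! s) j = (xs' ! s) j" if "s < t" for s
    using arg_cong[OF own_types, of "\<lambda>l. l ! s"] that len by simp
  have action_eq: "(as ! s) j = (as' ! s) j" if "s < t" for s
    using arg_cong[OF own_actions, of "\<lambda>l. l ! s"] that len by simp
  have take_eq: "take s as = take s as'" if "s < t" for s
  proof -
    have "s \<le> t - 1" using that by simp
    then show ?thesis using arg_cong[OF public_past, of "take s"] by (simp add: min.absorb1)
  qed
  have public_past_nth_eq: "as ! s = as' ! s" if "s < t - 1" for s
    using arg_cong[OF public_past, of "\<lambda>l. l ! s"] that by simp
  have take_types_eq: "map (\<lambda>x. x j) (take (Suc s) xs) = map (\<lambda>x. x j) (take (Suc s) xs')" for s
    using arg_cong[OF own_types, of "take (Suc s)"] by (simp add: take_map)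
  have "hd xs j = hd xs' j"
  proof (cases "t = 0")
    case True
    then show ?thesis using len by simp
  next
    case False
    then have "xs \<noteq> []" "xs' \<noteq> []" using len by auto
    then show ?thesis using type_eq[of 0] False by (simp add: hd_conv_nth)
  qed
  moreover have
    "(\<Prod>s<length as. g j (take s as) (map (\<lambda>x. x j) (take (Suc s) xs)) ((as ! s) j))
   = (\<Prod>s<length as'. g j (take s as') (map (\<lambda>x. x j) (take (Suc s) xs')) ((as' ! s) j))"
    using len by (intro prod.cong) (auto simp: take_eq action_eq take_types_eq)
  moreover have
    "(\<Prod>s<length xs - 1. Q j (s + 2) ((xs ! s) j) (as ! s) ((xs ! Suc s) j))
   = (\<Prod>s<length xs' - 1. Q j (s + 2) ((xs' ! s) j) (as' ! s) ((xs' ! Suc s) j))"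
    using len by (intro prod.cong) (auto simp: type_eq public_past_nth_eq)
  ultimately show ?thesis
    unfolding player_weight_def by simp
qed

lemma player_weight_graft_list:
  assumes len: "length px = t" "length qx = t" "length pa = t" "length qa = t"
    and public_past: "take (t - 1) pa = take (t - 1) qa"
  shows "player_weight Q1 Q g j (graft_list i px qx) (graft_list i pa qa)
       = (if j = i then player_weight Q1 Q g j px pa else player_weight Q1 Q g j qx qa)"
proof -
  have "take (t - 1) (graft_list i pa qa) = take (t - 1) pa"
       "take (t - 1) (graft_list i pa qa) = take (t - 1) qa"
    using public_past by (simp_all add: take_graft_list)
  then show ?thesis
    using len by (auto intro: player_weight_local simp: map_apply_graft_list)
qed

lemma traj_weight_graft_list:
  assumes agree: "\<And>j. j \<noteq> i \<Longrightarrow> g1 j = g2 j"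
    and len: "length px = t" "length qx = t" "length pa = t" "length qa = t"
    and public_past: "take (t - 1) pa = take (t - 1) qa"
  shows "traj_weight Q1 Q g1 (graft_list i px qx) (graft_list i pa qa) *
           traj_weight Q1 Q g2 (graft_list i qx px) (graft_list i qa pa)
         = traj_weight Q1 Q g1 px pa * traj_weight Q1 Q g2 qx qa"
proof -
  have "player_weight Q1 Q g1 j px pa = player_weight Q1 Q g2 j px pa"
       "player_weight Q1 Q g1 j qx qa = player_weight Q1 Q g2 j qx qa" if "j \<noteq> i" for j
    using agree[OF that] by (simp_all add: player_weight_def)
  then show ?thesis
    unfolding traj_weight_eq_prod_player_weight prod.distrib[symmetric]
    using player_weight_graft_list[OF len public_past]
      player_weight_graft_list[OF len(2,1,4,3) public_past[symmetric]]
    by (intro prod.cong) auto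
qed

definition trajs_with_public_history ::
  "('n \<Rightarrow> 'x set) \<Rightarrow> ('n \<Rightarrow> 'a set) \<Rightarrow> nat \<Rightarrow> ('n \<Rightarrow> 'a) list \<Rightarrow> ('n, 'x, 'a) history set" where
  "trajs_with_public_history Xs As t ah = {p \<in> trajs Xs As t. take (t - 1) (snd p) = ah}"

lemma graft_in_trajs_with_public_history:
  assumes "p \<in> trajs_with_public_history Xs As t ah" "q \<in> trajs_with_public_history Xs As t ah"
  shows "graft i p q \<in> trajs_with_public_history Xs As t ah"
  using assms graft_in_trajs[of p Xs As t q i]
  by (auto simp: trajs_with_public_history_def graft_def take_graft_list)

lemma graft_graft_trajs_with_public_history:
  assumes "p \<in> trajs_with_public_history Xs As t ah" "q \<in> trajs_with_public_history Xs As t ah"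
  shows "graft i (graft i p q) (graft i q p) = p"
  using assms by (intro graft_graft) (auto simp: trajs_with_public_history_def trajs_def)

lemma traj_weight_graft:
  assumes agree: "\<And>j. j \<noteq> i \<Longrightarrow> g1 j = g2 j"
    and p: "p \<in> trajs_with_public_history Xs As t ah" and q: "q \<in> trajs_with_public_history Xs As t ah"
  shows "traj_weight Q1 Q g1 (fst (graft i p q)) (snd (graft i p q)) *
           traj_weight Q1 Q g2 (fst (graft i q p)) (snd (graft i q p))
         = traj_weight Q1 Q g1 (fst p) (snd p) * traj_weight Q1 Q g2 (fst q) (snd q)"
proof -
  have "length (fst p) = t" "length (fst q) = t" "length (snd p) = t" "length (snd q) = t"
       "take (t - 1) (snd p) = take (t - 1) (snd q)"
    using p q by (auto simp: trajs_with_public_history_def trajs_def)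
  from traj_weight_graft_list[OF agree this] show ?thesis
    by (simp add: graft_def)
qed

lemma game_prob_eq_sum_trajs_with_public_history:
  assumes "\<And>p. E p \<Longrightarrow> take (t - 1) (snd p) = ah"
  shows "game_prob Xs As t Q1 Q g E
       = (\<Sum>p\<in>{p \<in> trajs_with_public_history Xs As t ah. E p}. traj_weight Q1 Q g (fst p) (snd p))"
proof -
  have "{h \<in> trajs Xs As t. E h} = {p \<in> trajs_with_public_history Xs As t ah. E p}"
    using assms by (auto simp: trajs_with_public_history_def)
  then show ?thesis
    unfolding game_prob_def by simp
qed

lemma game_prob_exchange:
  fixes i :: "'n::finite" and Xs :: "'n \<Rightarrow> 'x set" and As :: "'n \<Rightarrow> 'a set"
  assumes agree: "\<And>j. j \<noteq> i \<Longrightarrow> g1 j = g2 j"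
    and A_own: "\<And>p q. p \<in> trajs Xs As t \<Longrightarrow> q \<in> trajs Xs As t \<Longrightarrow>
                  take (t - 1) (snd p) = take (t - 1) (snd q) \<Longrightarrow> A (graft i p q) = A p"
    and B_others: "\<And>p q. p \<in> trajs Xs As t \<Longrightarrow> q \<in> trajs Xs As t \<Longrightarrow>
                     take (t - 1) (snd p) = take (t - 1) (snd q) \<Longrightarrow> B (graft i q p) = B p"
    and A_public: "\<And>p. A p \<Longrightarrow> take (t - 1) (snd p) = ah"
    and B_public: "\<And>p. B p \<Longrightarrow> take (t - 1) (snd p) = ah"
  shows "game_prob Xs As t Q1 Q g1 A * game_prob Xs As t Q1 Q g2 B
       = game_prob Xs As t Q1 Q g1 (\<lambda>p. A p \<and> B p) *
         game_prob Xs As t Q1 Q g2 (\<lambda>(xs, as). take (t - 1) as = ah)"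
proof -
  define H where "H = trajs_with_public_history Xs As t ah"
  define \<sigma> where "\<sigma> z = (graft i (fst z) (snd z), graft i (snd z) (fst z))"
    for z :: "('n, 'x, 'a) history \<times> ('n, 'x, 'a) history"
  define w where "w z = traj_weight Q1 Q g1 (fst (fst z)) (snd (fst z)) *
                         traj_weight Q1 Q g2 (fst (snd z)) (snd (snd z))"
    for z :: "('n, 'x, 'a) history \<times> ('n, 'x, 'a) history"
  have graft_event: "A (graft i p q) = A p" "B (graft i q p) = B p" if "p \<in> H" "q \<in> H" for p q
    using that A_own B_others by (auto simp: H_def trajs_with_public_history_def)
  have involution: "\<sigma> (\<sigma> z) = z" and weight: "w (\<sigma> z) = w z" if zH: "z \<in> H \<times> H" for z
  proof -
    obtain p q where z: "z = (p, q)" and p: "p \<in> trajs_with_public_history Xs As t ah"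
      and q: "q \<in> trajs_with_public_history Xs As t ah"
      using zH by (auto simp: H_def)
    show "\<sigma> (\<sigma> z) = z"
      using graft_graft_trajs_with_public_history[OF p q] graft_graft_trajs_with_public_history[OF q p]
      by (simp add: z \<sigma>_def)
    show "w (\<sigma> z) = w z"
      using traj_weight_graft[OF agree p q] by (simp add: z \<sigma>_def w_def)
  qed
  have "game_prob Xs As t Q1 Q g1 A * game_prob Xs As t Q1 Q g2 B = sum w ({p \<in> H. A p} \<times> {q \<in> H. B q})"
    using A_public B_public
    by (simp add: H_def game_prob_eq_sum_trajs_with_public_history sum_product sum.cartesian_product w_def
                  case_prod_beta)
  also have "\<dots> = sum w ({p \<in> H. A p \<and> B p} \<times> H)"
  proof (rule sum.reindex_bij_witness[where i = \<sigma> and j = \<sigma>])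
    show "\<sigma> (\<sigma> z) = z" if "z \<in> {p \<in> H. A p \<and> B p} \<times> H" for z
      using that involution by auto
    show "\<sigma> (\<sigma> z) = z" "w (\<sigma> z) = w z" if "z \<in> {p \<in> H. A p} \<times> {q \<in> H. B q}" for z
      using that involution weight by auto
    show "\<sigma> z \<in> {p \<in> H. A p} \<times> {q \<in> H. B q}" if z: "z \<in> {p \<in> H. A p \<and> B p} \<times> H" for z
    proof -
      obtain p q where "z = (p, q)" "p \<in> H" "q \<in> H" "A p" "B p" using z by auto
      then show ?thesis
        using graft_event[of p q] by (simp add: \<sigma>_def H_def graft_in_trajs_with_public_history)
    qed
    show "\<sigma> z \<in> {p \<in> H. A p \<and> B p} \<times> H" if z: "z \<in> {p \<in> H. A p} \<times> {q \<in> H. B q}" for z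
    proof -
      obtain p q where "z = (p, q)" "p \<in> H" "q \<in> H" "A p" "B q" using z by auto
      then show ?thesis
        using graft_event[of p q] graft_event[of q p]
        by (simp add: \<sigma>_def H_def graft_in_trajs_with_public_history)
    qed
  qed
  also have "\<dots> = game_prob Xs As t Q1 Q g1 (\<lambda>p. A p \<and> B p) *
                  game_prob Xs As t Q1 Q g2 (\<lambda>(xs, as). take (t - 1) as = ah)"
  proof -
    have "game_prob Xs As t Q1 Q g1 (\<lambda>p. A p \<and> B p)
            = (\<Sum>p\<in>{p \<in> H. A p \<and> B p}. traj_weight Q1 Q g1 (fst p) (snd p))"
      unfolding H_def by (rule game_prob_eq_sum_trajs_with_public_history) (use A_public in blast)
    moreover have "game_prob Xs As t Q1 Q g2 (\<lambda>(xs, as). take (t - 1) as = ah)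
                     = (\<Sum>q\<in>H. traj_weight Q1 Q g2 (fst q) (snd q))"
      by (simp add: game_prob_def H_def trajs_with_public_history_def case_prod_beta)
    ultimately show ?thesis
      by (simp add: sum_product sum.cartesian_product w_def case_prod_beta)
  qed
  finally show ?thesis .
qed

section \<open>The conditional law of the current profile\<close>

abbreviation public_history_event :: "nat \<Rightarrow> ('n \<Rightarrow> 'a) list \<Rightarrow> ('n, 'x, 'a) history \<Rightarrow> bool" where
  "public_history_event t ah \<equiv> \<lambda>(xs, as). take (t - 1) as = ah"

abbreviation info_event ::
  "'n \<Rightarrow> nat \<Rightarrow> ('n \<Rightarrow> 'a) list \<Rightarrow> 'x list \<Rightarrow> 'a \<Rightarrow> ('n, 'x, 'a) history \<Rightarrow> bool" where
  "info_event i t ah xih ai \<equiv> \<lambda>(xs, as).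
     take (t - 1) as = ah \<and> map (\<lambda>x. x i) (take t xs) = xih \<and> (as ! (t - 1)) i = ai"

abbreviation current_event :: "nat \<Rightarrow> ('n \<Rightarrow> 'x) \<Rightarrow> ('n \<Rightarrow> 'a) \<Rightarrow> ('n, 'x, 'a) history \<Rightarrow> bool" where
  "current_event t xtl atl \<equiv> \<lambda>(xs, as). xs ! (t - 1) = xtl \<and> as ! (t - 1) = atl"

abbreviation others_current_event ::
  "'n \<Rightarrow> nat \<Rightarrow> ('n \<Rightarrow> 'x) \<Rightarrow> ('n \<Rightarrow> 'a) \<Rightarrow> ('n, 'x, 'a) history \<Rightarrow> bool" where
  "others_current_event i t xtl atl \<equiv> \<lambda>(xs, as).
     \<forall>j. j \<noteq> i \<longrightarrow> (xs ! (t - 1)) j = xtl j \<and> (as ! (t - 1)) j = atl j"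

lemma info_event_graft:
  assumes "p \<in> trajs Xs As t" "q \<in> trajs Xs As t" "1 \<le> t"
    and "take (t - 1) (snd p) = take (t - 1) (snd q)"
  shows "info_event i t ah xih ai (graft i p q) = info_event i t ah xih ai p"
  using assms by (auto simp: graft_def take_graft_list map_apply_graft_list trajs_def case_prod_beta)

lemma public_history_event_graft:
  assumes "take (t - 1) (snd p) = take (t - 1) (snd q)"
  shows "public_history_event t ah (graft i p q) = public_history_event t ah p"
  using assms by (simp add: graft_def take_graft_list case_prod_beta)

lemma others_public_event_graft:
  assumes "p \<in> trajs Xs As t" "q \<in> trajs Xs As t" "1 \<le> t"
    and "take (t - 1) (snd p) = take (t - 1) (snd q)"
  shows "(others_current_event i t xtl atl (graft i q p) \<and> public_history_event t ah (graft i q p))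
     \<longleftrightarrow> (others_current_event i t xtl atl p \<and> public_history_event t ah p)"
  using assms by (auto simp: graft_def take_graft_list trajs_def case_prod_beta)

lemma current_info_event_iff:
  assumes "1 \<le> t" "t \<le> length xs"
  shows "current_event t xtl atl (xs, as) \<and> info_event i t ah xih ai (xs, as) \<longleftrightarrow>
           (xtl i = last xih \<and> atl i = ai) \<and> info_event i t ah xih ai (xs, as) \<and>
           others_current_event i t xtl atl (xs, as) \<and> public_history_event t ah (xs, as)"
proof -
  have "take t xs \<noteq> []"
    using assms by auto
  then have "last (map (\<lambda>x. x i) (take t xs)) = (xs ! (t - 1)) i"
    using assms by (simp add: last_map last_conv_nth min_def)
  then show ?thesis
    by (auto simp: fun_eq_iff; metis)
qed

lemma game_prob_current_info_event:
  assumes t: "1 \<le> t" "t \<le> T"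
  shows "game_prob Xs As T Q1 Q g (\<lambda>h. current_event t xtl atl h \<and> info_event i t ah xih ai h)
       = (if xtl i = last xih \<and> atl i = ai then 1 else 0) *
         game_prob Xs As T Q1 Q g (\<lambda>h. info_event i t ah xih ai h \<and>
           (others_current_event i t xtl atl h \<and> public_history_event t ah h))"
proof -
  let ?c = "xtl i = last xih \<and> atl i = ai"
  have pointwise: "current_event t xtl atl h \<and> info_event i t ah xih ai h \<longleftrightarrow>
          ?c \<and> (info_event i t ah xih ai h \<and>
                 (others_current_event i t xtl atl h \<and> public_history_event t ah h))"
    if "h \<in> trajs Xs As T" for h
  proof -
    obtain xs as where h: "h = (xs, as)" by (cases h)
    then have "t \<le> length xs"
      using that t by (auto simp: trajs_def)
    then show ?thesis
      unfolding h by (rule current_info_event_iff[OF t(1)])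
  qed
  have event_set: "{h \<in> trajs Xs As T. current_event t xtl atl h \<and> info_event i t ah xih ai h}
      = {h \<in> trajs Xs As T. ?c \<and> (info_event i t ah xih ai h \<and>
           (others_current_event i t xtl atl h \<and> public_history_event t ah h))}"
    by (intro Collect_cong conj_cong refl pointwise)
  show ?thesis
    unfolding game_prob_def event_set by (cases ?c) auto
qed

lemma game_cond_prob_current_given_info:
  assumes model: "valid_model Xs As T Q1 Q" and strat: "valid_strategy Xs As T g"
    and t: "1 \<le> t" "t \<le> T"
    and pos: "game_prob Xs As T Q1 Q g (info_event i t ah xih ai) > 0"
  shows "game_cond_prob Xs As T Q1 Q g (current_event t xtl atl) (info_event i t ah xih ai)
       = (if xtl i = last xih \<and> atl i = ai then 1 else 0) *
         game_cond_prob Xs As T Q1 Q g (others_current_event i t xtl atl) (public_history_event t ah)"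
proof -
  let ?P = "game_prob Xs As T Q1 Q g" and ?Pt = "game_prob Xs As t Q1 Q g"
  let ?info = "info_event i t ah xih ai" and ?public = "public_history_event t ah"
  let ?others = "\<lambda>h. others_current_event i t xtl atl h \<and> public_history_event t ah h"
  have truncate: "?P ?info = ?Pt ?info" "?P ?public = ?Pt ?public" "?P ?others = ?Pt ?others"
    "?P (\<lambda>h. ?info h \<and> ?others h) = ?Pt (\<lambda>h. ?info h \<and> ?others h)"
    by (rule game_prob_truncate[OF model strat t]; use t in \<open>force simp: trajs_def min_def\<close>)+
  have "?Pt ?info * ?Pt ?others = ?Pt (\<lambda>h. ?info h \<and> ?others h) * ?Pt ?public"
  proof (rule game_prob_exchange[where i = i])
    fix p q assume pq: "p \<in> trajs Xs As t" "q \<in> trajs Xs As t"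
      and public_past: "take (t - 1) (snd p) = take (t - 1) (snd q)"
    show "?info (graft i p q) = ?info p"
      using pq t(1) public_past by (rule info_event_graft)
    show "?others (graft i q p) = ?others p"
      using pq t(1) public_past by (rule others_public_event_graft)
  qed (auto split: prod.splits)
  moreover have "?P ?info \<le> ?P ?public"
    using t by (intro game_prob_mono[OF model strat]) (auto split: prod.splits)
  ultimately show ?thesis
    unfolding game_cond_prob_def game_prob_current_info_event[OF t]
    using pos truncate by (simp add: field_simps)
qed

lemma game_cond_prob_others_independent_of_own_strategy:
  assumes model: "valid_model Xs As T Q1 Q"
    and strat: "valid_strategy Xs As T g" and strat': "valid_strategy Xs As T g'"
    and agree: "\<forall>j. j \<noteq> i \<longrightarrow> g' j = g j" and t: "1 \<le> t" "t \<le> T"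
    and pos: "game_prob Xs As T Q1 Q g (public_history_event t ah) > 0"
    and pos': "game_prob Xs As T Q1 Q g' (public_history_event t ah) > 0"
  shows "game_cond_prob Xs As T Q1 Q g' (others_current_event i t xtl atl) (public_history_event t ah)
       = game_cond_prob Xs As T Q1 Q g (others_current_event i t xtl atl) (public_history_event t ah)"
proof -
  let ?public = "public_history_event t ah"
  let ?others = "\<lambda>h. others_current_event i t xtl atl h \<and> public_history_event t ah h"
  have truncate: "game_prob Xs As T Q1 Q gg ?public = game_prob Xs As t Q1 Q gg ?public"
    "game_prob Xs As T Q1 Q gg ?others = game_prob Xs As t Q1 Q gg ?others"
    if "valid_strategy Xs As T gg" for gg
    by (rule game_prob_truncate[OF model that t]; use t in \<open>force simp: trajs_def min_def\<close>)+
  have "game_prob Xs As t Q1 Q g ?public * game_prob Xs As t Q1 Q g' ?others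
      = game_prob Xs As t Q1 Q g (\<lambda>h. ?public h \<and> ?others h) * game_prob Xs As t Q1 Q g' ?public"
  proof (rule game_prob_exchange[where i = i])
    fix p q assume pq: "p \<in> trajs Xs As t" "q \<in> trajs Xs As t"
      and public_past: "take (t - 1) (snd p) = take (t - 1) (snd q)"
    show "?public (graft i p q) = ?public p"
      using public_past by (rule public_history_event_graft)
    show "?others (graft i q p) = ?others p"
      using pq t(1) public_past by (rule others_public_event_graft)
  qed (use agree in \<open>auto split: prod.splits\<close>)
  moreover have "(\<lambda>h. ?public h \<and> ?others h) = ?others"
    by auto
  ultimately show ?thesis
    unfolding game_cond_prob_def
    using pos pos' truncate[OF strat] truncate[OF strat'] by (simp add: field_simps)
qed

theorem claim4:
  fixes Xs :: "'n::finite \<Rightarrow> 'x set" and As :: "'n \<Rightarrow> 'a set" and T :: nat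
    and Q1 :: "'n \<Rightarrow> 'x \<Rightarrow> real"
    and Q :: "'n \<Rightarrow> nat \<Rightarrow> 'x \<Rightarrow> ('n \<Rightarrow> 'a) \<Rightarrow> 'x \<Rightarrow> real"
    and g :: "'n \<Rightarrow> ('n \<Rightarrow> 'a) list \<Rightarrow> 'x list \<Rightarrow> 'a \<Rightarrow> real"
    and i :: 'n and t :: nat
    and ah :: "('n \<Rightarrow> 'a) list" and xih :: "'x list" and ai :: 'a
    and xtl :: "'n \<Rightarrow> 'x" and atl :: "'n \<Rightarrow> 'a"
  assumes model: "valid_model Xs As T Q1 Q"
    and strat: "valid_strategy Xs As T g"
    and t_range: "1 \<le> t" "t \<le> T"
    and ah: "length ah = t - 1" "set ah \<subseteq> action_profiles As"
    and xih: "length xih = t" "set xih \<subseteq> Xs i"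
    and ai: "ai \<in> As i"
    and pos: "game_prob Xs As T Q1 Q g
                (\<lambda>(xs, as). take (t - 1) as = ah \<and> map (\<lambda>x. x i) (take t xs) = xih
                            \<and> (as ! (t - 1)) i = ai) > 0"
    and xtl: "xtl \<in> type_profiles Xs" and atl: "atl \<in> action_profiles As"
  shows
    "game_cond_prob Xs As T Q1 Q g
        (\<lambda>(xs, as). xs ! (t - 1) = xtl \<and> as ! (t - 1) = atl)
        (\<lambda>(xs, as). take (t - 1) as = ah \<and> map (\<lambda>x. x i) (take t xs) = xih
                    \<and> (as ! (t - 1)) i = ai)
     = (if xtl i = last xih \<and> atl i = ai then 1 else 0) *
       game_cond_prob Xs As T Q1 Q g
        (\<lambda>(xs, as). \<forall>j. j \<noteq> i \<longrightarrow> (xs ! (t - 1)) j = xtl j \<and> (as ! (t - 1)) j = atl j)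
        (\<lambda>(xs, as). take (t - 1) as = ah)
     \<and> (\<forall>g'. valid_strategy Xs As T g' \<and> (\<forall>j. j \<noteq> i \<longrightarrow> g' j = g j) \<and>
            game_prob Xs As T Q1 Q g' (\<lambda>(xs, as). take (t - 1) as = ah) > 0 \<longrightarrow>
            game_cond_prob Xs As T Q1 Q g'
              (\<lambda>(xs, as). \<forall>j. j \<noteq> i \<longrightarrow> (xs ! (t - 1)) j = xtl j \<and> (as ! (t - 1)) j = atl j)
              (\<lambda>(xs, as). take (t - 1) as = ah)
            = game_cond_prob Xs As T Q1 Q g
              (\<lambda>(xs, as). \<forall>j. j \<noteq> i \<longrightarrow> (xs ! (t - 1)) j = xtl j \<and> (as ! (t - 1)) j = atl j)
              (\<lambda>(xs, as). take (t - 1) as = ah))"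
proof -
  have "game_prob Xs As T Q1 Q g (info_event i t ah xih ai)
          \<le> game_prob Xs As T Q1 Q g (public_history_event t ah)"
    using t_range by (intro game_prob_mono[OF model strat]) (auto split: prod.splits)
  then have "game_prob Xs As T Q1 Q g (public_history_event t ah) > 0"
    using pos by linarith
  then show ?thesis
    using game_cond_prob_current_given_info[OF model strat t_range pos]
      game_cond_prob_others_independent_of_own_strategy[OF model strat _ _ t_range]
    by blast
qed

end
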